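(* Define the Genocchi numbers $g_n$ ($n\ge1$) by $\sum_{n\ge 1}g_n t^n = \sum_{m\ge 1}\frac{m!(m-1)!\,t^{m}}{\prod_{k=1}^m (1+k^2 t)}$. Then for all $n\ge 1$, $g_n$ equals the number of cycles on $[2n]$ with only even-odd drops, i.e. cycles all of whose drops $(a,b)$ have $a$ even and $b$ odd.
   Context: For $N\ge1$, a cycle on $[N]=\{1,\dots,N\}$ is an equivalence class of permutations $\pi=\pi_1\cdots\pi_N$ of $[N]$ (one-line notation) under cyclic rotation of the entries; indices are read modulo $N$ (so $\pi_{N+1}=\pi_1$). A drop of a cycle is a consecutive pair $(\pi_i,\pi_{i+1})$, $1\le i\le N$, with $\pi_i>\pi_{i+1}$ (independent of the rotation chosen). A drop $(a,b)$ is even-odd if $a$ is even and $b$ is odd. *)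

theory Defs
  imports "HOL-Computational_Algebra.Formal_Power_Series"
begin

definition genocchi_term :: "nat \<Rightarrow> rat fps" where
  "genocchi_term m =
     fps_const (of_nat (fact m * fact (m - 1))) * fps_X ^ m *
     inverse (\<Prod>k=1..m. (1 + fps_const (of_nat (k^2)) * fps_X))"

(* Coefficient of t^n in  sum_{m>=1} genocchi_term m.  Since genocchi_term m has order >= m,
   only the summands with m <= n contribute to the coefficient of t^n. *)
definition genocchi :: "nat \<Rightarrow> rat" where
  "genocchi n = (\<Sum>m=1..n. fps_nth (genocchi_term m) n)"

definition perms_list :: "nat \<Rightarrow> nat list set" where
  "perms_list N = {xs. distinct xs \<and> set xs = {1..N}}"

definition cyc_rel :: "nat \<Rightarrow> (nat list \<times> nat list) set" where
  "cyc_rel N = {(xs, ys). xs \<in> perms_list N \<and> ys \<in> perms_list N \<and> (\<exists>k. ys = rotate k xs)}"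

definition cycles :: "nat \<Rightarrow> nat list set set" where
  "cycles N = perms_list N // cyc_rel N"

definition is_drop :: "nat list \<Rightarrow> nat \<Rightarrow> nat \<Rightarrow> bool" where
  "is_drop xs a b \<longleftrightarrow> (\<exists>i < length xs. a = xs ! i \<and> b = xs ! ((i + 1) mod length xs) \<and> a > b)"

definition only_even_odd_drops :: "nat list \<Rightarrow> bool" where
  "only_even_odd_drops xs \<longleftrightarrow> (\<forall>a b. is_drop xs a b \<longrightarrow> even a \<and> odd b)"

end

theory Submission
  imports Defs "HOL-Computational_Algebra.Polynomial"
begin

(* Write a cycle on [N] as the word starting with 1, call it admissible if each of its drops
   ends in an odd letter, and weigh it by x ^ (number of drops with odd top).  The cycles of the
   theorem are the admissible cycles on [2n] of weight 1, so they are counted by P_2n(0), where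
   P_N(x) is the weight polynomial of the admissible cycles on [N].

   Every admissible cycle on [N+1] arises exactly once by inserting N+1 in front of one of the
   ceil(N/2) odd letters of an admissible cycle on [N].  The broken pair (a, b) loses an odd-top
   drop if it was one, and the new drop (N+1, b) has odd top iff N+1 is odd, so
     P_(N+1) = x^[N+1 odd] (ceil(N/2) P_N + (1 - x) P_N').
   For Q_N(x) = P_N(1 - x) this reads Q_(N+1) = (1 - x)^[N+1 odd] (ceil(N/2) Q_N - x Q_N'), and two
   such steps show that the coefficients of Q_2n, read from the top, obey the recurrence
   g(n+1, m) = m(m-1) g(n, m-1) - m^2 g(n, m) of g(n, m) = [t^n] m!(m-1)! t^m / prod (1 + k^2 t).
   Hence P_2n(0) = Q_2n(1) = sum_m g(n, m) = g_n. *)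

section \<open>Consecutive pairs of a cyclic word\<close>

fun adjacent_pairs :: "'a list \<Rightarrow> ('a \<times> 'a) list" where
  "adjacent_pairs (a # b # l) = (a, b) # adjacent_pairs (b # l)"
| "adjacent_pairs _ = []"

lemma adjacent_pairs_eq_zip: "adjacent_pairs l = zip l (tl l)"
  by (induction l rule: adjacent_pairs.induct) auto

lemma adjacent_pairs_append:
  "l1 \<noteq> [] \<Longrightarrow> l2 \<noteq> [] \<Longrightarrow>
    adjacent_pairs (l1 @ l2) = adjacent_pairs l1 @ (last l1, hd l2) # adjacent_pairs l2"
  by (induction l1 rule: adjacent_pairs.induct) (auto simp: neq_Nil_conv)

definition cyclic_pairs :: "'a list \<Rightarrow> ('a \<times> 'a) list" where
  "cyclic_pairs xs = adjacent_pairs (xs @ [hd xs])"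

lemma length_cyclic_pairs [simp]: "length (cyclic_pairs xs) = length xs"
  by (simp add: cyclic_pairs_def adjacent_pairs_eq_zip)

lemma nth_cyclic_pairs:
  "i < length xs \<Longrightarrow> cyclic_pairs xs ! i = (xs ! i, xs ! (Suc i mod length xs))"
  by (cases xs) (auto simp: cyclic_pairs_def adjacent_pairs_eq_zip nth_append nth_Cons' mod_Suc)

lemma cyclic_pairs_append:
  assumes "as \<noteq> []"
  shows "cyclic_pairs (as @ bs) =
    adjacent_pairs as @ (last as, hd (bs @ [hd as])) # adjacent_pairs (bs @ [hd as])"
  using assms adjacent_pairs_append[of as "bs @ [hd as]"] by (simp add: cyclic_pairs_def)

lemma cyclic_pairs_insert:
  assumes "as \<noteq> []"
  shows "cyclic_pairs (as @ x # bs) =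
    adjacent_pairs as @ (last as, x) # (x, hd (bs @ [hd as])) # adjacent_pairs (bs @ [hd as])"
  using cyclic_pairs_append[OF assms, of "x # bs"] by (cases bs) auto

lemma cyclic_pairs_rotate1: "cyclic_pairs (rotate1 xs) = rotate1 (cyclic_pairs xs)"
proof (cases xs)
  case (Cons a l)
  then show ?thesis
  proof (cases l)
    case (Cons b l')
    then show ?thesis
      using \<open>xs = a # l\<close> adjacent_pairs_append[of "b # l'" "[a, b]"]
        adjacent_pairs_append[of "b # l'" "[a]"]
      by (simp add: cyclic_pairs_def)
  qed (simp add: cyclic_pairs_def)
qed (simp add: cyclic_pairs_def)

lemma set_cyclic_pairs_rotate: "set (cyclic_pairs (rotate k xs)) = set (cyclic_pairs xs)"
  by (induction k) (simp_all add: cyclic_pairs_rotate1)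

lemma is_drop_iff: "is_drop xs a b \<longleftrightarrow> (a, b) \<in> set (cyclic_pairs xs) \<and> b < a"
  by (auto simp: is_drop_def in_set_conv_nth nth_cyclic_pairs)

lemma only_even_odd_drops_rotate:
  "only_even_odd_drops (rotate k xs) \<longleftrightarrow> only_even_odd_drops xs"
  by (simp add: only_even_odd_drops_def is_drop_iff set_cyclic_pairs_rotate)

section \<open>Rooted representatives of cycles\<close>

lemma length_perms_list: "xs \<in> perms_list N \<Longrightarrow> length xs = N"
  unfolding perms_list_def using distinct_card by fastforce

lemma finite_perms_list: "finite (perms_list N)"
proof (rule finite_subset)
  show "perms_list N \<subseteq> {xs. set xs \<subseteq> {1..N} \<and> length xs \<le> N}"
    using length_perms_list by (auto simp: perms_list_def)
qed (rule finite_lists_length_le, simp)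

lemma rotate_perms_list: "xs \<in> perms_list N \<Longrightarrow> rotate k xs \<in> perms_list N"
  by (simp add: perms_list_def)

lemma ex_rotate_inverse: "\<exists>j. rotate j (rotate k xs) = xs"
proof (cases "xs = []")
  case False
  have "(length xs - k mod length xs + k) mod length xs
      = (length xs - k mod length xs + k mod length xs) mod length xs"
    by (simp add: mod_add_right_eq)
  also have "\<dots> = 0"
    using False by (simp add: less_imp_le)
  finally show ?thesis
    by (auto simp: rotate_rotate intro: exI[of _ "length xs - k mod length xs"])
qed simp

lemma rotate_eq_self_if_hd_eq:
  assumes "distinct xs" and "hd (rotate k xs) = hd xs"
  shows "rotate k xs = xs"
proof (cases "xs = []")
  case False
  then have "xs ! (k mod length xs) = xs ! 0"
    using assms(2) hd_rotate_conv_nth[OF False, of k] hd_conv_nth[OF False] by simp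
  then have "k mod length xs = 0"
    using assms(1) False by (simp add: nth_eq_iff_index_eq)
  then show ?thesis by simp
qed simp

lemma rotate_to_hd:
  assumes "x \<in> set xs"
  obtains k where "hd (rotate k xs) = x"
proof -
  obtain i where "i < length xs" "xs ! i = x"
    using assms by (auto simp: in_set_conv_nth)
  then have "hd (rotate i xs) = x"
    using hd_rotate_conv_nth[of xs i] by (cases "xs = []") auto
  then show ?thesis ..
qed

lemma equiv_cyc_rel: "equiv (perms_list N) (cyc_rel N)"
proof (rule equivI)
  show "refl_on (perms_list N) (cyc_rel N)"
    unfolding refl_on_def cyc_rel_def by (auto intro: exI[of _ 0])
  show "sym (cyc_rel N)"
  proof (rule symI)
    fix xs ys assume "(xs, ys) \<in> cyc_rel N"
    then obtain k where "xs \<in> perms_list N" "ys \<in> perms_list N" "ys = rotate k xs"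
      by (auto simp: cyc_rel_def)
    moreover obtain j where "rotate j (rotate k xs) = xs"
      using ex_rotate_inverse by blast
    ultimately show "(ys, xs) \<in> cyc_rel N"
      by (auto simp: cyc_rel_def intro!: exI[of _ j])
  qed
  show "trans (cyc_rel N)"
    unfolding trans_def cyc_rel_def by (auto simp: rotate_rotate)
qed (auto simp: cyc_rel_def)

definition rooted_perms :: "nat \<Rightarrow> nat list set" where
  "rooted_perms N = {xs \<in> perms_list N. hd xs = 1}"

lemma finite_rooted_perms: "finite (rooted_perms N)"
  using finite_perms_list by (simp add: rooted_perms_def)

lemma rooted_perms_cyc_rel_eq:
  assumes "xs \<in> rooted_perms N" "ys \<in> rooted_perms N" "(xs, ys) \<in> cyc_rel N"
  shows "xs = ys"
proof -
  obtain k where "ys = rotate k xs"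
    using assms(3) by (auto simp: cyc_rel_def)
  moreover have "distinct xs" "hd ys = hd xs"
    using assms(1,2) by (auto simp: rooted_perms_def perms_list_def)
  ultimately show ?thesis
    using rotate_eq_self_if_hd_eq[of xs k] by simp
qed

lemma cycles_rooted_repE:
  assumes "N \<ge> 1" "C \<in> cycles N"
  obtains xs where "xs \<in> rooted_perms N" "xs \<in> C" "C = cyc_rel N `` {xs}"
proof -
  obtain ys where ys: "ys \<in> perms_list N" "C = cyc_rel N `` {ys}"
    using assms(2) unfolding cycles_def by (elim quotientE) blast
  have "1 \<in> set ys"
    using ys(1) assms(1) by (simp add: perms_list_def)
  then obtain k where k: "hd (rotate k ys) = 1"
    by (rule rotate_to_hd)
  have rotated: "(ys, rotate k ys) \<in> cyc_rel N"
    using ys rotate_perms_list by (auto simp: cyc_rel_def)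
  then have "rotate k ys \<in> C" "C = cyc_rel N `` {rotate k ys}"
    using ys equiv_class_eq[OF equiv_cyc_rel rotated] by auto
  moreover have "rotate k ys \<in> rooted_perms N"
    using ys k rotate_perms_list by (simp add: rooted_perms_def)
  ultimately show ?thesis
    using that by blast
qed

lemma card_cycles_eq_card_rooted_perms:
  assumes "N \<ge> 1" and rotate_invariant: "\<And>k xs. P (rotate k xs) \<longleftrightarrow> P xs"
  shows "card {C \<in> cycles N. \<forall>xs \<in> C. P xs} = card {xs \<in> rooted_perms N. P xs}"
proof -
  let ?class = "\<lambda>xs. cyc_rel N `` {xs}"
  have "bij_betw ?class {xs \<in> rooted_perms N. P xs} {C \<in> cycles N. \<forall>xs \<in> C. P xs}"
  proof (rule bij_betw_imageI)
    show "inj_on ?class {xs \<in> rooted_perms N. P xs}"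
    proof (rule inj_onI)
      fix xs ys assume "xs \<in> {xs \<in> rooted_perms N. P xs}" "ys \<in> {xs \<in> rooted_perms N. P xs}"
        and same_class: "?class xs = ?class ys"
      moreover have "(ys, ys) \<in> cyc_rel N"
        using \<open>ys \<in> {xs \<in> rooted_perms N. P xs}\<close>
        by (auto simp: cyc_rel_def rooted_perms_def intro: exI[of _ 0])
      ultimately show "xs = ys"
        using rooted_perms_cyc_rel_eq by blast
    qed
    show "?class ` {xs \<in> rooted_perms N. P xs} = {C \<in> cycles N. \<forall>xs \<in> C. P xs}"
    proof (intro equalityI subsetI)
      fix C assume "C \<in> ?class ` {xs \<in> rooted_perms N. P xs}"
      then obtain xs where xs: "xs \<in> rooted_perms N" "P xs" "C = ?class xs"
        by blast
      then have "C \<in> cycles N"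
        by (auto simp: cycles_def rooted_perms_def intro: quotientI)
      moreover have "P ys" if "ys \<in> C" for ys
        using that xs rotate_invariant by (auto simp: cyc_rel_def)
      ultimately show "C \<in> {C \<in> cycles N. \<forall>xs \<in> C. P xs}"
        by blast
    next
      fix C assume "C \<in> {C \<in> cycles N. \<forall>xs \<in> C. P xs}"
      moreover from this obtain xs where "xs \<in> rooted_perms N" "xs \<in> C" "C = ?class xs"
        using cycles_rooted_repE[OF assms(1)] by blast
      ultimately show "C \<in> ?class ` {xs \<in> rooted_perms N. P xs}"
        by blast
    qed
  qed
  then show ?thesis
    by (rule bij_betw_same_card[symmetric])
qed

section \<open>Inserting the largest letter\<close>

definition drop_bottoms_odd :: "nat list \<Rightarrow> bool" where
  "drop_bottoms_odd xs \<longleftrightarrow> (\<forall>(a, b) \<in> set (cyclic_pairs xs). b < a \<longrightarrow> odd b)"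

definition odd_top_drop :: "nat \<times> nat \<Rightarrow> bool" where
  "odd_top_drop e \<longleftrightarrow> snd e < fst e \<and> odd (fst e)"

definition odd_top_drops :: "nat list \<Rightarrow> nat" where
  "odd_top_drops xs = length (filter odd_top_drop (cyclic_pairs xs))"

lemma only_even_odd_drops_iff:
  "only_even_odd_drops xs \<longleftrightarrow> drop_bottoms_odd xs \<and> odd_top_drops xs = 0"
  by (auto simp: only_even_odd_drops_def is_drop_iff drop_bottoms_odd_def odd_top_drops_def
      odd_top_drop_def filter_empty_conv)

definition insert_after :: "nat \<Rightarrow> 'a \<Rightarrow> 'a list \<Rightarrow> 'a list" where
  "insert_after i x xs = take (Suc i) xs @ x # drop (Suc i) xs"

lemma set_insert_after: "set (insert_after i x xs) = insert x (set xs)"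
proof -
  have "set (as @ x # bs) = insert x (set (as @ bs))" for as bs :: "'a list"
    by simp
  then show ?thesis
    unfolding insert_after_def by (simp only: append_take_drop_id)
qed

lemma distinct_insert_after: "distinct (insert_after i x xs) \<longleftrightarrow> distinct xs \<and> x \<notin> set xs"
proof -
  have "distinct (as @ x # bs) \<longleftrightarrow> distinct (as @ bs) \<and> x \<notin> set (as @ bs)" for as bs :: "'a list"
    by auto
  then show ?thesis
    unfolding insert_after_def by (simp only: append_take_drop_id)
qed

lemma hd_insert_after: "xs \<noteq> [] \<Longrightarrow> hd (insert_after i x xs) = hd xs"
  by (cases xs) (simp_all add: insert_after_def)

lemma insert_after_inj:
  assumes "x \<notin> set xs" "x \<notin> set ys" "i < length xs" "j < length ys"
    and "insert_after i x xs = insert_after j x ys"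
  shows "xs = ys" and "i = j"
proof -
  have "take (Suc i) xs = take (Suc j) ys" "drop (Suc i) xs = drop (Suc j) ys"
    using assms(5) append_Cons_eq_iff[of x "take (Suc i) xs" "drop (Suc i) xs"]
      assms(1,2) by (auto simp: insert_after_def dest: in_set_takeD in_set_dropD)
  then show "xs = ys"
    by (metis append_take_drop_id)
  moreover have "length (take (Suc i) xs) = length (take (Suc j) ys)"
    using \<open>take (Suc i) xs = take (Suc j) ys\<close> by simp
  ultimately show "i = j"
    using assms(3,4) by simp
qed

lemma insert_after_append: "as \<noteq> [] \<Longrightarrow> insert_after (length as - 1) x (as @ bs) = as @ x # bs"
  by (simp add: insert_after_def)

lemma cyclic_pairs_insert_after:
  assumes "i < length xs"
  obtains ps qs where "cyclic_pairs xs = ps @ cyclic_pairs xs ! i # qs"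
    and "cyclic_pairs (insert_after i x xs) =
      ps @ (fst (cyclic_pairs xs ! i), x) # (x, snd (cyclic_pairs xs ! i)) # qs"
proof -
  define as where "as = take (Suc i) xs"
  define bs where "bs = drop (Suc i) xs"
  have xs: "xs = as @ bs" and as: "as \<noteq> []" "length as = Suc i"
    using assms by (auto simp: as_def bs_def)
  have ins: "insert_after i x xs = as @ x # bs"
    by (simp add: insert_after_def as_def bs_def)
  have pairs: "cyclic_pairs xs =
      adjacent_pairs as @ (last as, hd (bs @ [hd as])) # adjacent_pairs (bs @ [hd as])"
    unfolding xs by (rule cyclic_pairs_append[OF as(1)])
  then have "cyclic_pairs xs ! i = (last as, hd (bs @ [hd as]))"
    using as(2) by (simp add: nth_append adjacent_pairs_eq_zip)
  with pairs show ?thesis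
    using that cyclic_pairs_insert[OF as(1), of x bs] by (simp add: ins)
qed

lemma
  assumes "i < length xs" and "\<forall>y \<in> set xs. y < x"
  shows drop_bottoms_odd_insert_after:
      "drop_bottoms_odd (insert_after i x xs) \<longleftrightarrow>
        drop_bottoms_odd xs \<and> odd (snd (cyclic_pairs xs ! i))"
    and odd_top_drops_insert_after:
      "odd_top_drops (insert_after i x xs) + of_bool (odd_top_drop (cyclic_pairs xs ! i)) =
        odd_top_drops xs + of_bool (odd x)"
proof -
  obtain a b where ab: "cyclic_pairs xs ! i = (a, b)"
    by (cases "cyclic_pairs xs ! i")
  have "Suc i mod length xs < length xs"
    using assms(1) by (intro mod_less_divisor) auto
  then have "a < x" "b < x"
    using assms ab by (auto simp: nth_cyclic_pairs)
  moreover obtain ps qs where "cyclic_pairs xs = ps @ (a, b) # qs"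
    and "cyclic_pairs (insert_after i x xs) = ps @ (a, x) # (x, b) # qs"
    by (rule cyclic_pairs_insert_after[OF assms(1), of x, unfolded ab fst_conv snd_conv])
  ultimately show
    "drop_bottoms_odd (insert_after i x xs) \<longleftrightarrow>
      drop_bottoms_odd xs \<and> odd (snd (cyclic_pairs xs ! i))"
    "odd_top_drops (insert_after i x xs) + of_bool (odd_top_drop (cyclic_pairs xs ! i)) =
      odd_top_drops xs + of_bool (odd x)"
    using ab by (simp_all add: drop_bottoms_odd_def odd_top_drops_def odd_top_drop_def, blast)
qed

definition bottom_odd_perms :: "nat \<Rightarrow> nat list set" where
  "bottom_odd_perms N = {xs \<in> rooted_perms N. drop_bottoms_odd xs}"

definition slots_before_odd :: "nat list \<Rightarrow> nat set" where
  "slots_before_odd xs = {i. i < length xs \<and> odd (xs ! (Suc i mod length xs))}"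

lemma finite_bottom_odd_perms: "finite (bottom_odd_perms N)"
  using finite_rooted_perms by (simp add: bottom_odd_perms_def)

lemma finite_slots_before_odd: "finite (slots_before_odd xs)"
  by (simp add: slots_before_odd_def)

lemma snd_cyclic_pairs_nth:
  "i < length xs \<Longrightarrow> snd (cyclic_pairs xs ! i) = xs ! (Suc i mod length xs)"
  by (simp add: nth_cyclic_pairs)

lemma insert_after_in_bottom_odd_perms:
  assumes xs: "xs \<in> bottom_odd_perms N" and i: "i \<in> slots_before_odd xs"
  shows "insert_after i (Suc N) xs \<in> bottom_odd_perms (Suc N)"
proof -
  have perm: "distinct xs" "set xs = {1..N}" "hd xs = 1" "drop_bottoms_odd xs"
    using xs by (auto simp: bottom_odd_perms_def rooted_perms_def perms_list_def)
  have "i < length xs"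
    using i by (simp add: slots_before_odd_def)
  then have "drop_bottoms_odd (insert_after i (Suc N) xs)"
    using perm i
    by (simp add: drop_bottoms_odd_insert_after snd_cyclic_pairs_nth slots_before_odd_def)
  moreover have "xs \<noteq> []"
    using \<open>i < length xs\<close> by auto
  ultimately show ?thesis
    using perm by (auto simp: bottom_odd_perms_def rooted_perms_def perms_list_def
        set_insert_after distinct_insert_after hd_insert_after)
qed

lemma bottom_odd_perms_SucE:
  assumes "N \<ge> 1" and ys: "ys \<in> bottom_odd_perms (Suc N)"
  obtains xs i where "xs \<in> bottom_odd_perms N" "i \<in> slots_before_odd xs"
    and "ys = insert_after i (Suc N) xs"
proof -
  have "Suc N \<in> set ys"
    using ys by (simp add: bottom_odd_perms_def rooted_perms_def perms_list_def)
  then obtain as bs where ys_split: "ys = as @ Suc N # bs"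
    by (meson split_list)
  have "as \<noteq> []"
    using ys ys_split assms(1) by (auto simp: bottom_odd_perms_def rooted_perms_def)
  define xs where "xs = as @ bs"
  define i where "i = length as - 1"
  have ys_ins: "ys = insert_after i (Suc N) xs"
    using insert_after_append[OF \<open>as \<noteq> []\<close>] by (simp add: ys_split xs_def i_def)
  have "i < length xs" "xs \<noteq> []"
    using \<open>as \<noteq> []\<close> by (auto simp: xs_def i_def neq_Nil_conv)
  have "distinct xs" "Suc N \<notin> set xs" "hd xs = 1"
    and set_ys: "insert (Suc N) (set xs) = insert (Suc N) {1..N}"
    using ys \<open>xs \<noteq> []\<close>
    by (auto simp: ys_ins bottom_odd_perms_def rooted_perms_def perms_list_def
        distinct_insert_after set_insert_after hd_insert_after atLeastAtMostSuc_conv)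
  moreover from set_ys have "set xs = {1..N}"
    using \<open>Suc N \<notin> set xs\<close> by (simp add: insert_ident)
  moreover have "drop_bottoms_odd xs \<and> odd (snd (cyclic_pairs xs ! i))"
    using ys \<open>i < length xs\<close> \<open>set xs = {1..N}\<close> drop_bottoms_odd_insert_after[of i xs "Suc N"]
    by (simp add: ys_ins bottom_odd_perms_def)
  ultimately have "xs \<in> bottom_odd_perms N" "i \<in> slots_before_odd xs"
    using \<open>i < length xs\<close>
    by (auto simp: bottom_odd_perms_def rooted_perms_def perms_list_def slots_before_odd_def
        snd_cyclic_pairs_nth)
  with ys_ins show ?thesis
    using that by blast
qed

lemma bij_betw_insert_after:
  assumes "N \<ge> 1"
  shows "bij_betw (\<lambda>(xs, i). insert_after i (Suc N) xs)
    (SIGMA xs:bottom_odd_perms N. slots_before_odd xs) (bottom_odd_perms (Suc N))"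
proof (rule bij_betw_imageI)
  show "inj_on (\<lambda>(xs, i). insert_after i (Suc N) xs)
      (SIGMA xs:bottom_odd_perms N. slots_before_odd xs)"
  proof (rule inj_onI, clarify)
    fix xs i ys j
    assume "xs \<in> bottom_odd_perms N" "i \<in> slots_before_odd xs"
      "ys \<in> bottom_odd_perms N" "j \<in> slots_before_odd ys"
      "insert_after i (Suc N) xs = insert_after j (Suc N) ys"
    then show "xs = ys \<and> i = j"
      using insert_after_inj[of "Suc N" xs ys i j]
      by (auto simp: bottom_odd_perms_def rooted_perms_def perms_list_def slots_before_odd_def)
  qed
  show "(\<lambda>(xs, i). insert_after i (Suc N) xs) ` (SIGMA xs:bottom_odd_perms N. slots_before_odd xs)
      = bottom_odd_perms (Suc N)"
  proof (intro equalityI subsetI)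
    fix ys assume "ys \<in> bottom_odd_perms (Suc N)"
    then obtain xs i where "xs \<in> bottom_odd_perms N" "i \<in> slots_before_odd xs"
      and "ys = insert_after i (Suc N) xs"
      using bottom_odd_perms_SucE[OF assms] by blast
    then show "ys \<in> (\<lambda>(xs, i). insert_after i (Suc N) xs) `
        (SIGMA xs:bottom_odd_perms N. slots_before_odd xs)"
      by (auto intro!: image_eqI[of _ _ "(xs, i)"])
  qed (auto intro: insert_after_in_bottom_odd_perms)
qed

lemma card_odd_atLeastAtMost: "card {x \<in> {1..N}. odd x} = Suc N div 2"
proof (induction N)
  case (Suc N)
  show ?case
  proof (cases "odd (Suc N)")
    case True
    then have "{x \<in> {1..Suc N}. odd x} = insert (Suc N) {x \<in> {1..N}. odd x}"
      by (auto simp: le_Suc_eq)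
    then show ?thesis
      using Suc.IH True by simp
  next
    case False
    then have "{x \<in> {1..Suc N}. odd x} = {x \<in> {1..N}. odd x}"
      by (auto simp: le_Suc_eq)
    then show ?thesis
      using Suc.IH False by simp
  qed
qed simp

lemma card_slots_before_odd:
  assumes "xs \<in> perms_list N"
  shows "card (slots_before_odd xs) = Suc N div 2"
proof -
  have "slots_before_odd xs = {i. i < length (rotate1 xs) \<and> odd (rotate1 xs ! i)}"
    by (auto simp: slots_before_odd_def nth_rotate1)
  then have "card (slots_before_odd xs) = length (filter odd (rotate1 xs))"
    by (simp add: length_filter_conv_card)
  also have "\<dots> = card ({x. odd x} \<inter> set xs)"
    using assms by (simp add: perms_list_def distinct_length_filter)
  also have "{x. odd x} \<inter> set xs = {x \<in> {1..N}. odd x}"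
    using assms unfolding perms_list_def by blast
  finally show ?thesis
    by (simp only: card_odd_atLeastAtMost)
qed

text \<open>Every odd-top drop ends in an odd letter, so it sits at a slot before an odd letter.\<close>

lemma card_odd_top_drop_slots:
  assumes "drop_bottoms_odd xs"
  shows "card {i \<in> slots_before_odd xs. odd_top_drop (cyclic_pairs xs ! i)} = odd_top_drops xs"
proof -
  have "{i \<in> slots_before_odd xs. odd_top_drop (cyclic_pairs xs ! i)} =
      {i. i < length (cyclic_pairs xs) \<and> odd_top_drop (cyclic_pairs xs ! i)}"
  proof (intro Collect_cong iffI)
    fix i assume i: "i < length (cyclic_pairs xs) \<and> odd_top_drop (cyclic_pairs xs ! i)"
    obtain a b where ab: "cyclic_pairs xs ! i = (a, b)"
      by (cases "cyclic_pairs xs ! i")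
    then have "(a, b) \<in> set (cyclic_pairs xs)" "b < a"
      using i nth_mem[of i "cyclic_pairs xs"] by (auto simp: odd_top_drop_def)
    then have "odd (snd (cyclic_pairs xs ! i))"
      using assms ab by (auto simp: drop_bottoms_odd_def)
    with i show "i \<in> slots_before_odd xs \<and> odd_top_drop (cyclic_pairs xs ! i)"
      by (simp add: slots_before_odd_def snd_cyclic_pairs_nth)
  qed (simp add: slots_before_odd_def)
  then show ?thesis
    by (simp add: odd_top_drops_def length_filter_conv_card)
qed

lemma odd_top_drops_le:
  assumes "xs \<in> bottom_odd_perms N"
  shows "odd_top_drops xs \<le> Suc N div 2"
proof -
  have "card {i \<in> slots_before_odd xs. odd_top_drop (cyclic_pairs xs ! i)} \<le>
      card (slots_before_odd xs)"
    by (intro card_mono finite_slots_before_odd) auto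
  then show ?thesis
    using assms card_odd_top_drop_slots card_slots_before_odd
    by (auto simp: bottom_odd_perms_def rooted_perms_def)
qed

section \<open>The odd-top drop polynomial\<close>

definition odd_top_drop_poly :: "nat \<Rightarrow> rat poly" where
  "odd_top_drop_poly N = (\<Sum>xs\<in>bottom_odd_perms N. monom 1 (odd_top_drops xs))"

lemma monom_pair_eq_pderiv_monom:
  fixes c j k :: nat
  assumes "j \<le> k"
  shows "monom (of_nat j) (j + c - 1) + monom (of_nat (k - j)) (j + c) =
    [:0, 1:] ^ c *
      (smult (of_nat k) (monom 1 j) + (1 - [:0, 1:]) * pderiv (monom (1 :: 'a :: idom) j))"
proof -
  have X_pow: "[:0, 1:] ^ n = (monom 1 n :: 'a poly)" for n
    by (simp add: monom_altdef)
  have "smult (of_nat k) (monom 1 j) + (1 - [:0, 1:]) * pderiv (monom (1 :: 'a) j) =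
      monom (of_nat j) (j - 1) + monom (of_nat (k - j)) j"
    using assms by (cases j) (auto simp: poly_eq_iff coeff_monom pderiv_monom coeff_pCons
        of_nat_diff algebra_simps split: nat.split)
  moreover have "[:0, 1:] ^ c * monom (of_nat j :: 'a) (j - 1) = monom (of_nat j) (j + c - 1)"
    by (cases j) (simp_all add: X_pow mult_monom add.commute)
  ultimately show ?thesis
    by (simp add: X_pow mult_monom distrib_left add.commute)
qed

lemma sum_slots_monom_insert_after:
  assumes xs: "xs \<in> bottom_odd_perms N"
  defines "t \<equiv> odd_top_drops xs" and "c \<equiv> of_bool (odd (Suc N))"
  shows "(\<Sum>i\<in>slots_before_odd xs. monom (1 :: rat) (odd_top_drops (insert_after i (Suc N) xs))) =
    monom (of_nat t) (t + c - 1) + monom (of_nat (Suc N div 2 - t)) (t + c)"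
proof -
  define bad where "bad = {i \<in> slots_before_odd xs. odd_top_drop (cyclic_pairs xs ! i)}"
  have bottoms: "drop_bottoms_odd xs"
    using xs by (simp add: bottom_odd_perms_def)
  have card_bad: "card bad = t"
    using card_odd_top_drop_slots[OF bottoms] by (simp add: bad_def t_def)
  have card_good: "card (slots_before_odd xs - bad) = Suc N div 2 - t"
    using xs card_bad card_slots_before_odd[of xs N] finite_slots_before_odd
    by (simp add: card_Diff_subset bad_def bottom_odd_perms_def rooted_perms_def)
  have "odd_top_drops (insert_after i (Suc N) xs) = t + c - of_bool (i \<in> bad)"
    if "i \<in> slots_before_odd xs" for i
    using that odd_top_drops_insert_after[of i xs "Suc N"] xs
    by (auto simp: bad_def t_def c_def slots_before_odd_def bottom_odd_perms_def
        rooted_perms_def perms_list_def)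
  then have "(\<Sum>i\<in>slots_before_odd xs.
        monom (1 :: rat) (odd_top_drops (insert_after i (Suc N) xs))) =
      (\<Sum>i\<in>slots_before_odd xs. monom 1 (t + c - of_bool (i \<in> bad)))"
    by simp
  also have "\<dots> = (\<Sum>i\<in>slots_before_odd xs - bad. monom 1 (t + c - of_bool (i \<in> bad))) +
      (\<Sum>i\<in>bad. monom 1 (t + c - of_bool (i \<in> bad)))"
    by (rule sum.subset_diff) (auto simp: bad_def finite_slots_before_odd)
  also have "\<dots> = (\<Sum>i\<in>slots_before_odd xs - bad. monom 1 (t + c)) + (\<Sum>i\<in>bad. monom 1 (t + c - 1))"
    by simp
  also have "\<dots> = monom (of_nat t) (t + c - 1) + monom (of_nat (Suc N div 2 - t)) (t + c)"
    by (simp add: card_bad card_good of_nat_monom mult_monom)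
  finally show ?thesis .
qed

lemma odd_top_drop_poly_Suc:
  assumes "N \<ge> 1"
  shows "odd_top_drop_poly (Suc N) = [:0, 1:] ^ of_bool (odd (Suc N)) *
    (smult (of_nat (Suc N div 2)) (odd_top_drop_poly N) +
      (1 - [:0, 1:]) * pderiv (odd_top_drop_poly N))"
proof -
  define D where "D p = [:0, 1:] ^ of_bool (odd (Suc N)) *
    (smult (of_nat (Suc N div 2)) p + (1 - [:0, 1:]) * pderiv p)" for p :: "rat poly"
  have D_add: "D (p + q) = D p + D q" for p q
    by (simp add: D_def pderiv_add smult_add_right algebra_simps)
  have D_0: "D 0 = 0"
    by (simp add: D_def)
  have D_sum: "D (\<Sum>x\<in>A. f x) = (\<Sum>x\<in>A. D (f x))" for A :: "'b set" and f
    by (induction A rule: infinite_finite_induct) (simp_all add: D_add D_0)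
  have "odd_top_drop_poly (Suc N) = (\<Sum>(xs, i)\<in>(SIGMA xs:bottom_odd_perms N. slots_before_odd xs).
      monom 1 (odd_top_drops (insert_after i (Suc N) xs)))"
    unfolding odd_top_drop_poly_def
    using sum.reindex_bij_betw[OF bij_betw_insert_after[OF assms],
        of "\<lambda>ys. monom 1 (odd_top_drops ys)", symmetric]
    by (simp add: case_prod_beta')
  also have "\<dots> = (\<Sum>xs\<in>bottom_odd_perms N. \<Sum>i\<in>slots_before_odd xs.
      monom 1 (odd_top_drops (insert_after i (Suc N) xs)))"
    by (rule sum.Sigma[symmetric]) (simp_all add: finite_bottom_odd_perms finite_slots_before_odd)
  also have "\<dots> = (\<Sum>xs\<in>bottom_odd_perms N. D (monom 1 (odd_top_drops xs)))"
  proof (rule sum.cong)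
    fix xs assume xs: "xs \<in> bottom_odd_perms N"
    show "(\<Sum>i\<in>slots_before_odd xs. monom 1 (odd_top_drops (insert_after i (Suc N) xs))) =
        D (monom 1 (odd_top_drops xs))"
      unfolding sum_slots_monom_insert_after[OF xs] D_def
      by (rule monom_pair_eq_pderiv_monom[OF odd_top_drops_le[OF xs]])
  qed simp
  also have "\<dots> = D (odd_top_drop_poly N)"
    by (simp add: D_sum odd_top_drop_poly_def)
  finally show ?thesis
    by (simp add: D_def)
qed

lemma perms_list_1: "perms_list 1 = {[1]}"
proof (intro equalityI subsetI)
  fix xs assume xs: "xs \<in> perms_list 1"
  then obtain y where "xs = [y]"
    using length_perms_list[of xs 1] by (auto simp: length_Suc_conv)
  with xs show "xs \<in> {[1]}"
    by (simp add: perms_list_def)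
qed (simp add: perms_list_def)

lemma bottom_odd_perms_1: "bottom_odd_perms 1 = {[1]}"
proof (intro equalityI subsetI)
  fix xs :: "nat list" assume "xs \<in> bottom_odd_perms 1"
  then show "xs \<in> {[1]}"
    unfolding bottom_odd_perms_def rooted_perms_def perms_list_1 by simp
next
  fix xs :: "nat list" assume "xs \<in> {[1]}"
  then show "xs \<in> bottom_odd_perms 1"
    unfolding bottom_odd_perms_def rooted_perms_def perms_list_1
    by (simp add: drop_bottoms_odd_def cyclic_pairs_def)
qed

lemma odd_top_drop_poly_1: "odd_top_drop_poly 1 = 1"
  unfolding odd_top_drop_poly_def bottom_odd_perms_1
  by (simp add: odd_top_drops_def cyclic_pairs_def odd_top_drop_def)

lemma odd_top_drop_poly_2: "odd_top_drop_poly 2 = 1"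
  using odd_top_drop_poly_Suc[of 1, unfolded odd_top_drop_poly_1]
  by (simp add: numeral_2_eq_2 flip: one_pCons)

section \<open>The substitution \<open>x \<mapsto> 1 - x\<close>\<close>

definition reflected_drop_poly :: "nat \<Rightarrow> rat poly" where
  "reflected_drop_poly N = pcompose (odd_top_drop_poly N) [:1, -1:]"

lemma pcompose_power_left: "pcompose (p ^ n) q = pcompose p q ^ n"
  by (induction n) (simp_all add: pcompose_1 pcompose_mult)

lemma pcompose_pderiv_reflect:
  "pcompose (pderiv p) [:1, -1:] = - pderiv (pcompose p [:1, -1 :: 'a :: idom:])"
  by (simp add: pderiv_pcompose pderiv_pCons)

lemma reflected_drop_poly_Suc:
  assumes "N \<ge> 1"
  shows "reflected_drop_poly (Suc N) = (1 - [:0, 1:]) ^ of_bool (odd (Suc N)) *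
    (smult (of_nat (Suc N div 2)) (reflected_drop_poly N) -
      [:0, 1:] * pderiv (reflected_drop_poly N))"
proof -
  have X: "pcompose [:0, 1:] [:1, -1:] = 1 - [:0, 1 :: rat:]"
    by (simp add: pcompose_pCons one_pCons)
  have one_minus_X: "pcompose (1 - [:0, 1:]) [:1, -1:] = [:0, 1 :: rat:]"
    by (simp add: pcompose_diff pcompose_1 X)
  show ?thesis
    unfolding reflected_drop_poly_def odd_top_drop_poly_Suc[OF assms]
    by (simp add: pcompose_mult pcompose_add pcompose_smult pcompose_power_left X one_minus_X
        pcompose_pderiv_reflect)
qed

lemma coeff_smult_minus_X_pderiv:
  "coeff (smult c p - [:0, 1:] * pderiv p) j = (c - of_nat j) * coeff p (j :: nat)"
  for p :: "'a :: idom poly"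
  by (cases j) (simp_all add: coeff_pderiv algebra_simps)

lemma coeff_one_minus_X_mult:
  "coeff ((1 - [:0, 1:]) * p) j = coeff p j - (if j = 0 then 0 else coeff p (j - 1))"
  for p :: "'a :: comm_ring_1 poly"
  by (cases j) (simp_all add: left_diff_distrib coeff_pCons)

lemma coeff_reflected_drop_poly_double_Suc:
  assumes "n \<ge> 1"
  shows "coeff (reflected_drop_poly (2 * Suc n)) j = (of_nat (Suc n) - of_nat j) *
     ((of_nat n - of_nat j) * coeff (reflected_drop_poly (2 * n)) j -
      (if j = 0 then 0
       else (of_nat n - of_nat j + 1) * coeff (reflected_drop_poly (2 * n)) (j - 1)))"
proof -
  let ?X = "[:0, 1 :: rat:]"
  have odd_step: "reflected_drop_poly (Suc (2 * n)) = (1 - ?X) *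
      (smult (of_nat n) (reflected_drop_poly (2 * n)) - ?X * pderiv (reflected_drop_poly (2 * n)))"
    using reflected_drop_poly_Suc[of "2 * n"] assms by simp
  have even_step: "reflected_drop_poly (2 * Suc n) =
      smult (of_nat (Suc n)) (reflected_drop_poly (Suc (2 * n))) -
      ?X * pderiv (reflected_drop_poly (Suc (2 * n)))"
    using reflected_drop_poly_Suc[of "Suc (2 * n)"] by simp
  show ?thesis
    unfolding even_step odd_step coeff_smult_minus_X_pderiv coeff_one_minus_X_mult
    by (cases j) (simp_all add: algebra_simps)
qed

section \<open>Coefficients of the Genocchi series\<close>

definition genocchi_kernel :: "nat \<Rightarrow> rat fps" where
  "genocchi_kernel m = fps_X ^ m * inverse (\<Prod>k=1..m. 1 + fps_const (of_nat (k^2)) * fps_X)"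

lemma genocchi_term_eq_kernel:
  "genocchi_term m = fps_const (of_nat (fact m * fact (m - 1))) * genocchi_kernel m"
  by (simp add: genocchi_term_def genocchi_kernel_def mult.assoc)

lemma genocchi_kernel_0: "genocchi_kernel 0 = 1"
  by (simp add: genocchi_kernel_def)

lemma genocchi_kernel_Suc_mult:
  "genocchi_kernel (Suc m) * (1 + fps_const (of_nat (Suc m ^ 2)) * fps_X) =
    fps_X * genocchi_kernel m"
proof -
  define d :: "rat fps" where "d = 1 + fps_const (of_nat (Suc m ^ 2)) * fps_X"
  have "inverse d * d = 1"
    by (rule inverse_mult_eq_1) (simp add: d_def)
  moreover have "(\<Prod>k=1..Suc m. 1 + fps_const (of_nat (k^2)) * fps_X) =
      (\<Prod>k=1..m. 1 + fps_const (of_nat (k^2)) * fps_X) * d"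
    by (simp add: d_def)
  ultimately show ?thesis
    unfolding genocchi_kernel_def d_def[symmetric]
    by (simp add: fps_inverse_mult algebra_simps)
qed

lemma genocchi_kernel_nth_Suc_Suc:
  "fps_nth (genocchi_kernel (Suc m)) (Suc n) =
    fps_nth (genocchi_kernel m) n - of_nat (Suc m ^ 2) * fps_nth (genocchi_kernel (Suc m)) n"
proof -
  have "fps_nth (genocchi_kernel (Suc m) * (1 + fps_const (of_nat (Suc m ^ 2)) * fps_X)) (Suc n) =
      fps_nth (fps_X * genocchi_kernel m) (Suc n)"
    by (simp only: genocchi_kernel_Suc_mult)
  then have "fps_nth (genocchi_kernel (Suc m)) (Suc n) +
      of_nat (Suc m ^ 2) * fps_nth (genocchi_kernel (Suc m)) n = fps_nth (genocchi_kernel m) n"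
    by (simp add: distrib_left mult.commute[of _ fps_X] mult.left_commute[of _ fps_X])
      (simp add: mult.commute)
  then show ?thesis
    by (simp add: eq_diff_eq)
qed

lemma genocchi_term_nth_less: "n < m \<Longrightarrow> fps_nth (genocchi_term m) n = 0"
  by (simp add: genocchi_term_def mult.assoc fps_X_power_mult_nth)

lemma genocchi_term_nth_Suc:
  assumes "n \<ge> 1"
  shows "fps_nth (genocchi_term m) (Suc n) =
    of_nat (m * (m - 1)) * fps_nth (genocchi_term (m - 1)) n -
    of_nat (m^2) * fps_nth (genocchi_term m) n"
proof (cases m)
  case 0
  then show ?thesis
    by (simp add: genocchi_term_eq_kernel genocchi_kernel_0)
next
  case (Suc k)
  show ?thesis
  proof (cases "k = 0")
    case True
    then show ?thesis
      using assms Suc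
      by (simp add: genocchi_term_eq_kernel genocchi_kernel_nth_Suc_Suc genocchi_kernel_0)
  next
    case False
    then have fact_eq: "fact (Suc k) * fact k = Suc k * k * (fact k * fact (k - 1) :: nat)"
      by (cases k) (simp_all add: algebra_simps)
    show ?thesis
      unfolding Suc genocchi_term_eq_kernel diff_Suc_1 fact_eq
      by (simp add: genocchi_kernel_nth_Suc_Suc algebra_simps power2_eq_square)
  qed
qed

lemma genocchi_term_0: "genocchi_term 0 = 1"
  by (simp add: genocchi_term_def)

lemma coeff_reflected_drop_poly_double_Suc_le:
  assumes "n \<ge> 1" "j \<le> n"
    and coeff_double: "\<And>i. coeff (reflected_drop_poly (2 * n)) i =
      (if i \<le> n then fps_nth (genocchi_term (n - i)) n else 0)"
  shows "coeff (reflected_drop_poly (2 * Suc n)) j = fps_nth (genocchi_term (Suc n - j)) (Suc n)"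
proof -
  let ?g = "\<lambda>n m. fps_nth (genocchi_term m) n"
  let ?c = "coeff (reflected_drop_poly (2 * n))"
  define m where "m = Suc n - j"
  have m: "m \<ge> 1" "n - j = m - 1"
    using assms(2) by (simp_all add: m_def)
  have "(of_nat (Suc n) - of_nat j :: rat) = of_nat m"
    and "(of_nat n - of_nat j :: rat) = of_nat (m - 1)"
    using assms(2) by (simp_all add: m_def of_nat_diff)
  moreover have "?c j = ?g n (m - 1)"
    using coeff_double assms(2) m by simp
  moreover have "(if j = 0 then 0 else (of_nat n - of_nat j + 1) * ?c (j - 1)) = of_nat m * ?g n m"
  proof (cases j)
    case 0
    then show ?thesis
      by (simp add: m_def genocchi_term_nth_less)
  next
    case (Suc i)
    then have "?c i = ?g n m" "(of_nat n - of_nat j + 1 :: rat) = of_nat m"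
      using coeff_double[of i] assms(2) by (simp_all add: m_def of_nat_diff)
    then show ?thesis
      using Suc by simp
  qed
  ultimately have "coeff (reflected_drop_poly (2 * Suc n)) j =
      of_nat m * (of_nat (m - 1) * ?g n (m - 1) - of_nat m * ?g n m)"
    by (simp only: coeff_reflected_drop_poly_double_Suc[OF assms(1)])
  also have "\<dots> = ?g (Suc n) m"
    using genocchi_term_nth_Suc[OF assms(1), of m] m(1)
    by (simp add: algebra_simps power2_eq_square)
  finally show ?thesis
    by (simp add: m_def)
qed

lemma coeff_reflected_drop_poly_double:
  assumes "n \<ge> 1"
  shows "coeff (reflected_drop_poly (2 * n)) j =
    (if j \<le> n then fps_nth (genocchi_term (n - j)) n else 0)"
  using assms
proof (induction n arbitrary: j rule: nat_induct_at_least)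
  case base
  then show ?case
    by (cases j) (simp_all add: reflected_drop_poly_def odd_top_drop_poly_2 pcompose_1
        genocchi_term_def coeff_1)
next
  case (Suc n)
  show ?case
  proof (cases "j \<le> n")
    case True
    then show ?thesis
      using coeff_reflected_drop_poly_double_Suc_le[OF Suc.hyps True Suc.IH] by simp
  next
    case False
    then show ?thesis
      unfolding coeff_reflected_drop_poly_double_Suc[OF Suc.hyps]
      using Suc.IH[of j] Suc.IH[of "j - 1"]
      by (cases "j = Suc n") (simp_all add: genocchi_term_0)
  qed
qed

lemma poly_one_eq_sum_coeff:
  fixes p :: "'a :: comm_semiring_1 poly"
  assumes "degree p \<le> n"
  shows "poly p 1 = (\<Sum>i\<le>n. coeff p i)"
proof -
  have "poly p 1 = (\<Sum>i\<le>degree p. coeff p i)"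
    by (simp add: poly_altdef)
  also have "\<dots> = (\<Sum>i\<le>n. coeff p i)"
    by (rule sum.mono_neutral_left) (use assms in \<open>auto simp: coeff_eq_0\<close>)
  finally show ?thesis .
qed

lemma genocchi_eq_poly_reflected_drop_poly:
  assumes "n \<ge> 1"
  shows "genocchi n = poly (reflected_drop_poly (2 * n)) 1"
proof -
  have "degree (reflected_drop_poly (2 * n)) \<le> n"
    by (rule degree_le) (simp add: coeff_reflected_drop_poly_double[OF assms])
  \<comment> \<open>The added summand \<open>m = 0\<close> is the constant series 1, since \<open>fact (0 - 1) = 1\<close>.\<close>
  have "genocchi n = (\<Sum>m=0..n. fps_nth (genocchi_term m) n)"
    using assms by (simp add: genocchi_def sum.atLeast_Suc_atMost genocchi_term_0)
  also have "\<dots> = (\<Sum>j=0..n. fps_nth (genocchi_term (n - j)) n)"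
    by (subst sum.atLeastAtMost_rev) simp
  also have "\<dots> = (\<Sum>j\<le>n. coeff (reflected_drop_poly (2 * n)) j)"
    by (simp add: coeff_reflected_drop_poly_double[OF assms] atLeast0AtMost)
  also have "\<dots> = poly (reflected_drop_poly (2 * n)) 1"
    by (rule poly_one_eq_sum_coeff[symmetric]) fact
  finally show ?thesis .
qed

lemma coeff_0_odd_top_drop_poly:
  "coeff (odd_top_drop_poly N) 0 = of_nat (card {xs \<in> rooted_perms N. only_even_odd_drops xs})"
proof -
  have "coeff (odd_top_drop_poly N) 0 =
      (\<Sum>xs\<in>bottom_odd_perms N. if odd_top_drops xs = 0 then 1 else 0)"
    by (simp add: odd_top_drop_poly_def coeff_sum coeff_monom)
  also have "\<dots> = of_nat (card {xs \<in> bottom_odd_perms N. odd_top_drops xs = 0})"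
    using finite_bottom_odd_perms by (simp add: sum.If_cases Int_def)
  also have "{xs \<in> bottom_odd_perms N. odd_top_drops xs = 0} =
      {xs \<in> rooted_perms N. only_even_odd_drops xs}"
    by (auto simp: bottom_odd_perms_def only_even_odd_drops_iff)
  finally show ?thesis .
qed

theorem corollary1p3:
  fixes n :: nat
  assumes "n \<ge> 1"
  shows "genocchi n =
    of_nat (card {C \<in> cycles (2 * n). \<forall>xs \<in> C. only_even_odd_drops xs})"
proof -
  have "genocchi n = poly (reflected_drop_poly (2 * n)) 1"
    by (rule genocchi_eq_poly_reflected_drop_poly[OF assms])
  also have "\<dots> = coeff (odd_top_drop_poly (2 * n)) 0"
    by (simp add: reflected_drop_poly_def poly_pcompose poly_0_coeff_0)
  also have "\<dots> = of_nat (card {xs \<in> rooted_perms (2 * n). only_even_odd_drops xs})"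
    by (rule coeff_0_odd_top_drop_poly)
  also have "\<dots> = of_nat (card {C \<in> cycles (2 * n). \<forall>xs \<in> C. only_even_odd_drops xs})"
    using card_cycles_eq_card_rooted_perms[of "2 * n" only_even_odd_drops] assms
      only_even_odd_drops_rotate by simp
  finally show ?thesis .
qed

end
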